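(* Let $G$ be a finite group, $I$ a set, and $H=G^I$. Suppose that $f(a,b)=b$ for some $a,b\in G$ and some homogeneous monomial $f:G^2\to G$, and let $N$ be the normal subgroup of $G$ generated by $b$. Let $(X_m)_{m\in\mathbf{N}}$ be an increasing sequence of subsets of $H$ such that $\mathcal{G}(X_m)\subseteq X_{m+1}$ for all $m$ and $\bigcup_m X_m=H$. Then $N^I\subseteq X_m$ for all $m$ large enough.
   Context: For a subset $X$ of a group, $\mathcal{G}(X)=X\cup\{1\}\cup\{x^{-1}: x\in X\}\cup\{xy : x,y\in X\}$. For $n\in\mathbf{N}$, the set of functions $G^n\to G$ is a group under pointwise multiplication; its elements lying in the subgroup generated by the constant functions and the coordinate projections are called monomials. A monomial $m$ is homogeneous if $m(g_1,\dots,g_n)=1$ whenever at least one $g_i$ equals $1$. *)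

theory Defs
  imports "HOL-Algebra.Algebra"
begin

text \<open>Functions are represented
curried as 'a => 'a => 'a; only their values on carrier G matter.\<close>

inductive_set monomials2 :: "('a, 'b) monoid_scheme \<Rightarrow> ('a \<Rightarrow> 'a \<Rightarrow> 'a) set"
  for G where
  const: "c \<in> carrier G \<Longrightarrow> (\<lambda>x y. c) \<in> monomials2 G"
| proj1: "(\<lambda>x y. x) \<in> monomials2 G"
| proj2: "(\<lambda>x y. y) \<in> monomials2 G"
| one: "(\<lambda>x y. \<one>\<^bsub>G\<^esub>) \<in> monomials2 G"
| mult: "f \<in> monomials2 G \<Longrightarrow> g \<in> monomials2 G \<Longrightarrow>
         (\<lambda>x y. f x y \<otimes>\<^bsub>G\<^esub> g x y) \<in> monomials2 G"
| inv: "f \<in> monomials2 G \<Longrightarrow> (\<lambda>x y. inv\<^bsub>G\<^esub> (f x y)) \<in> monomials2 G"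

definition homogeneous2 :: "('a, 'b) monoid_scheme \<Rightarrow> ('a \<Rightarrow> 'a \<Rightarrow> 'a) \<Rightarrow> bool" where
  "homogeneous2 G f \<longleftrightarrow>
     (\<forall>g1\<in>carrier G. \<forall>g2\<in>carrier G. (g1 = \<one>\<^bsub>G\<^esub> \<or> g2 = \<one>\<^bsub>G\<^esub>) \<longrightarrow> f g1 g2 = \<one>\<^bsub>G\<^esub>)"

definition normal_closure :: "('a, 'b) monoid_scheme \<Rightarrow> 'a \<Rightarrow> 'a set" where
  "normal_closure G b = \<Inter> {N. N \<lhd> G \<and> b \<in> N}"

text \<open>The power group G^I, realised as extensional functions I -> carrier G with
pointwise operations.\<close>
definition pow_carrier :: "('a, 'b) monoid_scheme \<Rightarrow> 'i set \<Rightarrow> ('i \<Rightarrow> 'a) set" where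
  "pow_carrier G I = (\<Pi>\<^sub>E i\<in>I. carrier G)"

definition pow_one :: "('a, 'b) monoid_scheme \<Rightarrow> 'i set \<Rightarrow> 'i \<Rightarrow> 'a" where
  "pow_one G I = (\<lambda>i\<in>I. \<one>\<^bsub>G\<^esub>)"

definition pow_mult :: "('a, 'b) monoid_scheme \<Rightarrow> 'i set \<Rightarrow> ('i \<Rightarrow> 'a) \<Rightarrow> ('i \<Rightarrow> 'a) \<Rightarrow> 'i \<Rightarrow> 'a" where
  "pow_mult G I x y = (\<lambda>i\<in>I. x i \<otimes>\<^bsub>G\<^esub> y i)"

definition pow_inv :: "('a, 'b) monoid_scheme \<Rightarrow> 'i set \<Rightarrow> ('i \<Rightarrow> 'a) \<Rightarrow> 'i \<Rightarrow> 'a" where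
  "pow_inv G I x = (\<lambda>i\<in>I. inv\<^bsub>G\<^esub> (x i))"

definition gstep :: "('a, 'b) monoid_scheme \<Rightarrow> 'i set \<Rightarrow> ('i \<Rightarrow> 'a) set \<Rightarrow> ('i \<Rightarrow> 'a) set" where
  "gstep G I S = S \<union> {pow_one G I} \<union> (\<lambda>x. pow_inv G I x) ` S \<union> {z. \<exists>x\<in>S. \<exists>y\<in>S. z = pow_mult G I x y}"

end

theory Submission
  imports Defs
begin

text \<open>
  For \<open>g \<in> G\<close> and a set of indices \<open>S\<close> let \<open>g\<^sub>S \<in> G\<^sup>I\<close> be \<open>g\<close> on \<open>S\<close> and \<open>1\<close> off \<open>S\<close>,
  and let the level of \<open>x \<in> G\<^sup>I\<close> be the least \<open>m\<close> with \<open>x \<in> X\<^sub>m\<close>. The \<open>g\<close> for which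
  the levels of all \<open>g\<^sub>S\<close> are bounded form a normal subgroup of \<open>G\<close>. Once it contains \<open>b\<close>
  it contains \<open>N\<close>, and since \<open>N\<close> is finite, every element of \<open>N\<^sup>I\<close> is a product of at
  most \<open>|N|\<close> elements \<open>g\<^sub>S\<close> and so has bounded level.

  It remains to bound the levels of the \<open>b\<^sub>S\<close>. Up to additive constants, \<open>S \<mapsto> level b\<^sub>S\<close>
  is subadditive on disjoint unions and on differences, and the monomial gives one more
  property: if the \<open>D\<^sub>j\<close> are pairwise disjoint and \<open>T\<^sub>j \<subseteq> D\<^sub>j\<close>, then
  \<open>f(a\<^sub>U, b\<^bsub>D\<^sub>j\<^esub>) = b\<^bsub>T\<^sub>j\<^esub>\<close> for \<open>U = \<Union>\<^sub>j T\<^sub>j\<close>, so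
  \<open>level b\<^bsub>T\<^sub>j\<^esub> \<le> level b\<^bsub>D\<^sub>j\<^esub> + c\<close> with \<open>c\<close> independent of \<open>j\<close>.
  A function on subsets with these properties is bounded. Otherwise, one could keep splitting off
  a piece \<open>D\<^sub>j\<close> with a subset \<open>T\<^sub>j\<close> whose level exceeds that of \<open>D\<^sub>j\<close> by more than \<open>j\<close>
  while leaving an unbounded remainder, and this would contradict the uniform constant \<open>c\<close>.
\<close>

section \<open>Boundedness of level functions on subsets\<close>

lemma disjoint_family_by_choice:
  fixes P :: "nat \<Rightarrow> 'a set \<Rightarrow> bool"
  assumes "Inv A"
    and step: "\<And>n A. Inv A \<Longrightarrow> \<exists>D\<subseteq>A. Inv (A - D) \<and> P n D"
  obtains D where "disjoint_family D" "\<And>n. D n \<subseteq> A" "\<And>n. P n (D n)"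
proof -
  have "\<exists>As. \<forall>n. (Inv (As n) \<and> (n = 0 \<longrightarrow> As n = A))
      \<and> (\<exists>D\<subseteq>As n. As (Suc n) = As n - D \<and> P n D)"
  proof (rule dependent_nat_choice)
    show "\<exists>A'. Inv A' \<and> (0 = 0 \<longrightarrow> A' = A)" using \<open>Inv A\<close> by blast
  next
    fix A' and n :: nat assume "Inv A' \<and> (n = 0 \<longrightarrow> A' = A)"
    then obtain D where "D \<subseteq> A'" "Inv (A' - D)" "P n D" using step by blast
    then show "\<exists>A''. (Inv A'' \<and> (Suc n = 0 \<longrightarrow> A'' = A)) \<and> (\<exists>D\<subseteq>A'. A'' = A' - D \<and> P n D)"
      by blast
  qed
  then obtain As where As0: "As 0 = A"
    and AsSuc: "\<And>n. \<exists>D\<subseteq>As n. As (Suc n) = As n - D \<and> P n D"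
    by blast
  define D where "D n = As n - As (Suc n)" for n
  have As_Suc: "As (Suc n) \<subseteq> As n" and P_D: "P n (D n)" for n
    using AsSuc[of n] unfolding D_def by (auto simp: Diff_Diff_Int Int_absorb1)
  have As_anti: "As n \<subseteq> As m" if "m \<le> n" for m n
    using lift_Suc_antimono_le[of As, OF As_Suc] that by blast
  show thesis
  proof
    show "D n \<subseteq> A" for n
      using As_anti[of 0 n] As0 unfolding D_def by blast
    show "P n (D n)" for n by (rule P_D)
    show "disjoint_family D"
    proof -
      have "D m \<inter> D n = {}" if "m < n" for m n
        using As_anti[of "Suc m" n] that unfolding D_def by auto
      then show ?thesis
        unfolding disjoint_family_on_def by (metis Int_commute linorder_neqE_nat)
    qed
  qed
qed

lemma disjoint_family_Union_Int:
  assumes "disjoint_family D" "\<And>j. T j \<subseteq> D j"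
  shows "(\<Union>k. T k) \<inter> D j = T j"
proof
  show "T j \<subseteq> (\<Union>k. T k) \<inter> D j" using assms(2) by blast
  show "(\<Union>k. T k) \<inter> D j \<subseteq> T j"
  proof
    fix i assume "i \<in> (\<Union>k. T k) \<inter> D j"
    then obtain k where "i \<in> T k" "i \<in> D j" by blast
    moreover have "k = j"
      using disjoint_family_onD[OF assms(1) UNIV_I UNIV_I, of k j] assms(2)[of k] calculation by blast
    ultimately show "i \<in> T j" by simp
  qed
qed

locale set_level =
  fixes lv :: "'i set \<Rightarrow> nat"
  assumes level_Un_disjoint: "A \<inter> B = {} \<Longrightarrow> lv (A \<union> B) \<le> max (lv A) (lv B) + 1"
    and level_Diff: "S \<subseteq> R \<Longrightarrow> lv (R - S) \<le> max (lv R) (lv S) + 2"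
    and level_disjoint_family:
      "disjoint_family (D :: nat \<Rightarrow> 'i set) \<Longrightarrow> (\<And>j. T j \<subseteq> D j) \<Longrightarrow> \<exists>c. \<forall>j. lv (T j) \<le> lv (D j) + c"
begin

definition bounded_on :: "'i set \<Rightarrow> bool" where
  "bounded_on C \<longleftrightarrow> (\<exists>n. \<forall>T\<subseteq>C. lv T \<le> n)"

definition indecomposable :: "'i set \<Rightarrow> bool" where
  "indecomposable R \<longleftrightarrow> (\<forall>P\<subseteq>R. bounded_on P \<or> bounded_on (R - P))"

lemma level_le_split: "lv C \<le> max (lv (C - F)) (lv (C \<inter> F)) + 1"
  using level_Un_disjoint[of "C - F" "C \<inter> F"] by (simp add: Un_Diff_Int Diff_Int_distrib2 inf_commute)

lemma level_le_of_Diff: "S \<subseteq> R \<Longrightarrow> lv S \<le> max (lv R) (lv (R - S)) + 2"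
  using level_Diff[of "R - S" R] by (simp add: double_diff)

lemma bounded_on_empty: "bounded_on {}"
  unfolding bounded_on_def by auto

lemma bounded_on_subset: "bounded_on C \<Longrightarrow> D \<subseteq> C \<Longrightarrow> bounded_on D"
  unfolding bounded_on_def by (meson order_trans)

lemma bounded_on_Un:
  assumes "bounded_on C" "bounded_on D"
  shows "bounded_on (C \<union> D)"
proof -
  obtain n1 n2 where n1: "\<forall>T\<subseteq>C. lv T \<le> n1" and n2: "\<forall>T\<subseteq>D. lv T \<le> n2"
    using assms unfolding bounded_on_def by blast
  have "lv T \<le> max n2 n1 + 1" if "T \<subseteq> C \<union> D" for T
  proof -
    have "lv (T - C) \<le> n2" "lv (T \<inter> C) \<le> n1"
      using n1 n2 that by blast+
    then show ?thesis
      using level_le_split[of T C] by linarith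
  qed
  then show ?thesis unfolding bounded_on_def by blast
qed

lemma unbounded_Diff_bounded: "\<not> bounded_on R \<Longrightarrow> bounded_on D \<Longrightarrow> \<not> bounded_on (R - D)"
  using bounded_on_Un[of D "R - D"] bounded_on_subset[of "D \<union> (R - D)" R] by blast

lemma indecomposable_subset: "indecomposable R \<Longrightarrow> R' \<subseteq> R \<Longrightarrow> indecomposable R'"
  unfolding indecomposable_def by (meson Diff_mono bounded_on_subset dual_order.trans order_refl)

lemma indecomposable_exists_bounded_high:
  assumes "\<not> bounded_on R" "indecomposable R"
  shows "\<exists>C\<subseteq>R. bounded_on C \<and> n < lv C"
proof -
  obtain S where S: "S \<subseteq> R" "max (lv R) n + 2 < lv S"
    using assms(1) unfolding bounded_on_def by (meson not_le)
  show ?thesis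
  proof (cases "bounded_on S")
    case True
    then show ?thesis using S by auto
  next
    case False
    then have "bounded_on (R - S)"
      using assms(2) S(1) unfolding indecomposable_def by blast
    moreover have "n < lv (R - S)"
      using level_le_of_Diff[OF S(1)] S(2) by linarith
    ultimately show ?thesis by blast
  qed
qed

lemma indecomposable_disjoint_high_pieces:
  assumes unbounded: "\<not> bounded_on R" and indec: "indecomposable R"
  obtains C where "disjoint_family C" "\<And>j. C j \<subseteq> R" "\<And>j. j + K < lv (C j)"
proof (rule disjoint_family_by_choice[where Inv = "\<lambda>A. A \<subseteq> R \<and> bounded_on (R - A)"
      and P = "\<lambda>j C. j + K < lv C"])
  show "R \<subseteq> R \<and> bounded_on (R - R)" by (simp add: bounded_on_empty)
next
  fix j A assume A: "A \<subseteq> R \<and> bounded_on (R - A)"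
  have "\<not> bounded_on A"
    using unbounded_Diff_bounded[OF unbounded, of "R - A"] A by (simp add: double_diff)
  then obtain C where "C \<subseteq> A" "bounded_on C" "j + K < lv C"
    using indecomposable_exists_bounded_high indecomposable_subset[OF indec] A by blast
  moreover have "bounded_on (R - (A - C))"
    using bounded_on_subset[OF bounded_on_Un[OF conjunct2[OF A] \<open>bounded_on C\<close>]] by blast
  ultimately show "\<exists>D\<subseteq>A. (A - D \<subseteq> R \<and> bounded_on (R - (A - D))) \<and> j + K < lv D"
    using A by blast
qed blast+

lemma indecomposable_bounded_gap:
  assumes unbounded: "\<not> bounded_on R" and indec: "indecomposable R"
  shows "\<exists>D\<subseteq>R. bounded_on D \<and> (\<exists>T\<subseteq>D. lv D + K < lv T)"
proof (rule ccontr)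
  assume "\<not> ?thesis"
  then have no_gap: "lv T \<le> lv D + K" if "D \<subseteq> R" "bounded_on D" "T \<subseteq> D" for D T
    using that by (meson not_le)
  obtain C where C_disj: "disjoint_family C" and C_R: "\<And>j. C j \<subseteq> R"
    and C_high: "\<And>j. j + K < lv (C j)"
    using indecomposable_disjoint_high_pieces[OF unbounded indec] by blast
  \<comment> \<open>The union of the even-indexed pieces or its complement in \<open>R\<close> is bounded, and either one
     contains pieces of arbitrarily high index, hence of arbitrarily high level.\<close>
  define W where "W = (\<Union>j. C (2 * j))"
  have "W \<subseteq> R" unfolding W_def using C_R by blast
  obtain B where "B \<subseteq> R" "bounded_on B" and B_cofinal: "\<And>m. \<exists>j\<ge>m. C j \<subseteq> B"
  proof (cases "bounded_on W")
    case True
    show thesis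
    proof (rule that[of W])
      show "\<exists>j\<ge>m. C j \<subseteq> W" for m
        unfolding W_def by (intro exI[of _ "2 * m"]) auto
    qed fact+
  next
    case False
    show thesis
    proof (rule that[of "R - W"])
      show "bounded_on (R - W)"
        using False indec \<open>W \<subseteq> R\<close> unfolding indecomposable_def by blast
      have "C (Suc (2 * m)) \<inter> C (2 * k) = {}" for m k
        by (rule disjoint_family_onD[OF C_disj UNIV_I UNIV_I]) presburger
      then have "C (Suc (2 * m)) \<subseteq> R - W" for m
        unfolding W_def using C_R by blast
      then show "\<exists>j\<ge>m. C j \<subseteq> R - W" for m
        by (intro exI[of _ "Suc (2 * m)"]) simp
    qed blast
  qed
  obtain j where "lv B \<le> j" "C j \<subseteq> B" using B_cofinal by blast
  then have "lv (C j) \<le> lv B + K"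
    using no_gap \<open>B \<subseteq> R\<close> \<open>bounded_on B\<close> by blast
  with C_high[of j] \<open>lv B \<le> j\<close> show False by linarith
qed

lemma unbounded_gap:
  assumes "\<not> bounded_on R"
  shows "\<exists>D\<subseteq>R. \<not> bounded_on (R - D) \<and> (\<exists>T\<subseteq>D. lv D + K < lv T)"
proof (cases "indecomposable R")
  case True
  with assms obtain D where "D \<subseteq> R" "bounded_on D" "\<exists>T\<subseteq>D. lv D + K < lv T"
    by (metis indecomposable_bounded_gap)
  with unbounded_Diff_bounded[OF assms] show ?thesis by blast
next
  case False
  then obtain P where "P \<subseteq> R" "\<not> bounded_on P" "\<not> bounded_on (R - P)"
    unfolding indecomposable_def by blast
  moreover have "\<not> (\<forall>T\<subseteq>P. lv T \<le> lv P + K)"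
    using \<open>\<not> bounded_on P\<close> unfolding bounded_on_def by blast
  then obtain T where "T \<subseteq> P" "lv P + K < lv T"
    by (auto simp: not_le)
  ultimately show ?thesis by blast
qed

theorem level_bounded: "\<exists>n. \<forall>S. lv S \<le> n"
proof (rule ccontr)
  assume "\<nexists>n. \<forall>S. lv S \<le> n"
  then have "\<not> bounded_on UNIV" unfolding bounded_on_def by blast
  then obtain D where D_disj: "disjoint_family D" and D_gap: "\<And>j. \<exists>T\<subseteq>D j. lv (D j) + j < lv T"
  proof (rule disjoint_family_by_choice[where Inv = "\<lambda>A. \<not> bounded_on A"
        and P = "\<lambda>j D. \<exists>T\<subseteq>D. lv D + j < lv T"])
    show "\<exists>D\<subseteq>A. \<not> bounded_on (A - D) \<and> (\<exists>T\<subseteq>D. lv D + j < lv T)"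
      if "\<not> bounded_on A" for j A
      using that by (rule unbounded_gap)
  qed blast
  obtain T where T_sub: "\<And>j. T j \<subseteq> D j" and T_gap: "\<And>j. lv (D j) + j < lv (T j)"
    using D_gap by metis
  obtain c where "\<forall>j. lv (T j) \<le> lv (D j) + c"
    using level_disjoint_family[OF D_disj T_sub] by blast
  then have "lv (T c) \<le> lv (D c) + c" by blast
  with T_gap[of c] show False by linarith
qed

end

section \<open>Indicator elements of a power group\<close>

definition pow_indicator :: "('a, 'b) monoid_scheme \<Rightarrow> 'i set \<Rightarrow> 'a \<Rightarrow> 'i set \<Rightarrow> 'i \<Rightarrow> 'a" where
  "pow_indicator G I g S = (\<lambda>i\<in>I. if i \<in> S then g else \<one>\<^bsub>G\<^esub>)"

lemma (in group) pow_indicator_in: "g \<in> carrier G \<Longrightarrow> pow_indicator G I g S \<in> pow_carrier G I"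
  unfolding pow_indicator_def pow_carrier_def by auto

lemma (in group) pow_indicator_one: "pow_indicator G I \<one> S = pow_one G I"
  unfolding pow_indicator_def pow_one_def by auto

lemma (in group) pow_mult_indicator_disjoint:
  "A \<inter> B = {} \<Longrightarrow> g \<in> carrier G \<Longrightarrow>
    pow_mult G I (pow_indicator G I g A) (pow_indicator G I g B) = pow_indicator G I g (A \<union> B)"
  unfolding pow_mult_def pow_indicator_def by (rule restrict_ext) auto

lemma (in group) pow_mult_indicator_inv_subset:
  "S \<subseteq> R \<Longrightarrow> g \<in> carrier G \<Longrightarrow>
    pow_mult G I (pow_indicator G I g R) (pow_inv G I (pow_indicator G I g S)) = pow_indicator G I g (R - S)"
  unfolding pow_mult_def pow_inv_def pow_indicator_def by (rule restrict_ext) auto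

lemma (in group) pow_mult_indicator:
  "g \<in> carrier G \<Longrightarrow> h \<in> carrier G \<Longrightarrow>
    pow_mult G I (pow_indicator G I g S) (pow_indicator G I h S) = pow_indicator G I (g \<otimes> h) S"
  unfolding pow_mult_def pow_indicator_def by (rule restrict_ext) auto

lemma (in group) pow_inv_indicator:
  "g \<in> carrier G \<Longrightarrow> pow_inv G I (pow_indicator G I g S) = pow_indicator G I (inv g) S"
  unfolding pow_inv_def pow_indicator_def by (rule restrict_ext) auto

lemma (in group) pow_conj_indicator:
  "x \<in> carrier G \<Longrightarrow> g \<in> carrier G \<Longrightarrow>
    pow_mult G I (pow_mult G I (\<lambda>i\<in>I. x) (pow_indicator G I g S)) (\<lambda>i\<in>I. inv x)
      = pow_indicator G I (x \<otimes> g \<otimes> inv x) S"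
  unfolding pow_mult_def pow_indicator_def by (rule restrict_ext) auto

lemma (in group) homogeneous2_indicator:
  assumes "homogeneous2 G f" "f a b = b" "a \<in> carrier G" "b \<in> carrier G" "U \<inter> D = T"
  shows "(\<lambda>i\<in>I. f (pow_indicator G I a U i) (pow_indicator G I b D i)) = pow_indicator G I b T"
  using assms unfolding pow_indicator_def homogeneous2_def by (intro restrict_ext) auto

section \<open>Exhaustive filtrations of a power group\<close>

locale exhaustive_filtration = group G for G :: "('a, 'b) monoid_scheme" (structure) +
  fixes I :: "'i set" and Xs :: "nat \<Rightarrow> ('i \<Rightarrow> 'a) set"
  assumes Xs_subset: "Xs m \<subseteq> pow_carrier G I"
    and gstep_subset: "gstep G I (Xs m) \<subseteq> Xs (Suc m)"
    and Xs_exhaust: "pow_carrier G I \<subseteq> (\<Union>m. Xs m)"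
begin

abbreviation H where "H \<equiv> pow_carrier G I"

lemma Xs_subset_Suc: "Xs m \<subseteq> Xs (Suc m)"
  using gstep_subset unfolding gstep_def by blast

lemma pow_mult_in_Xs: "x \<in> Xs m \<Longrightarrow> y \<in> Xs m \<Longrightarrow> pow_mult G I x y \<in> Xs (Suc m)"
  using gstep_subset unfolding gstep_def by blast

lemma pow_inv_in_Xs: "x \<in> Xs m \<Longrightarrow> pow_inv G I x \<in> Xs (Suc m)"
  using gstep_subset unfolding gstep_def by blast

lemma pow_one_in_Xs: "pow_one G I \<in> Xs (Suc m)"
  using gstep_subset unfolding gstep_def by blast

lemma Xs_mono: "m \<le> n \<Longrightarrow> Xs m \<subseteq> Xs n"
  by (rule lift_Suc_mono_le[of Xs, OF Xs_subset_Suc])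

lemma in_Xs_mono: "x \<in> Xs m \<Longrightarrow> m \<le> n \<Longrightarrow> x \<in> Xs n"
  using Xs_mono by blast

definition level :: "('i \<Rightarrow> 'a) \<Rightarrow> nat" where
  "level x = (LEAST m. x \<in> Xs m)"

lemma in_Xs_level: "x \<in> H \<Longrightarrow> x \<in> Xs (level x)"
proof -
  assume "x \<in> H"
  then obtain m where "x \<in> Xs m" using Xs_exhaust by blast
  then show ?thesis unfolding level_def by (rule LeastI)
qed

lemma level_le: "x \<in> Xs m \<Longrightarrow> level x \<le> m"
  unfolding level_def by (rule Least_le)

lemma in_Xs_if_level_le: "x \<in> H \<Longrightarrow> level x \<le> m \<Longrightarrow> x \<in> Xs m"
  using in_Xs_level Xs_mono by blast

lemma level_pow_mult:
  assumes "x \<in> H" "y \<in> H"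
  shows "level (pow_mult G I x y) \<le> max (level x) (level y) + 1"
proof -
  have "x \<in> Xs (max (level x) (level y))" "y \<in> Xs (max (level x) (level y))"
    using assms by (auto intro: in_Xs_if_level_le)
  then show ?thesis
    by (simp add: level_le pow_mult_in_Xs)
qed

lemma level_pow_inv: "x \<in> H \<Longrightarrow> level (pow_inv G I x) \<le> level x + 1"
  by (simp add: in_Xs_level level_le pow_inv_in_Xs)

lemma pow_inv_closed: "x \<in> H \<Longrightarrow> pow_inv G I x \<in> H"
  unfolding pow_carrier_def pow_inv_def by auto

lemma restrict_mult_in_Xs:
  assumes "(\<lambda>i\<in>I. u i) \<in> Xs m" "(\<lambda>i\<in>I. v i) \<in> Xs m"
  shows "(\<lambda>i\<in>I. u i \<otimes> v i) \<in> Xs (Suc m)"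
proof -
  have "pow_mult G I (\<lambda>i\<in>I. u i) (\<lambda>i\<in>I. v i) = (\<lambda>i\<in>I. u i \<otimes> v i)"
    unfolding pow_mult_def by (rule restrict_ext) simp
  with pow_mult_in_Xs[OF assms] show ?thesis by simp
qed

lemma restrict_inv_in_Xs:
  assumes "(\<lambda>i\<in>I. u i) \<in> Xs m"
  shows "(\<lambda>i\<in>I. inv (u i)) \<in> Xs (Suc m)"
proof -
  have "pow_inv G I (\<lambda>i\<in>I. u i) = (\<lambda>i\<in>I. inv (u i))"
    unfolding pow_inv_def by (rule restrict_ext) simp
  with pow_inv_in_Xs[OF assms] show ?thesis by simp
qed

lemma monomial_in_Xs_add:
  assumes "h \<in> monomials2 G"
  shows "\<exists>d. \<forall>m. \<forall>x\<in>Xs m. \<forall>y\<in>Xs m. (\<lambda>i\<in>I. h (x i) (y i)) \<in> Xs (m + d)"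
  using assms
proof induction
  case (const c)
  have "(\<lambda>i\<in>I. c) \<in> Xs (level (\<lambda>i\<in>I. c))"
    using const by (intro in_Xs_level) (simp add: pow_carrier_def)
  then show ?case by (blast intro: in_Xs_mono le_add2)
next
  case proj1
  have "(\<lambda>i\<in>I. x i) = x" if "x \<in> Xs m" for x m
    using that Xs_subset unfolding pow_carrier_def by (blast intro: PiE_restrict)
  then show ?case by (intro exI[of _ 0]) simp
next
  case proj2
  have "(\<lambda>i\<in>I. y i) = y" if "y \<in> Xs m" for y m
    using that Xs_subset unfolding pow_carrier_def by (blast intro: PiE_restrict)
  then show ?case by (intro exI[of _ 0]) simp
next
  case one
  show ?case using pow_one_in_Xs unfolding pow_one_def Suc_eq_plus1 by blast
next
  case (mult h1 h2)
  then obtain d1 d2 where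
    d1: "\<forall>m. \<forall>x\<in>Xs m. \<forall>y\<in>Xs m. (\<lambda>i\<in>I. h1 (x i) (y i)) \<in> Xs (m + d1)" and
    d2: "\<forall>m. \<forall>x\<in>Xs m. \<forall>y\<in>Xs m. (\<lambda>i\<in>I. h2 (x i) (y i)) \<in> Xs (m + d2)"
    by blast
  have "(\<lambda>i\<in>I. h1 (x i) (y i) \<otimes> h2 (x i) (y i)) \<in> Xs (Suc (m + max d1 d2))"
    if "x \<in> Xs m" "y \<in> Xs m" for m x y
  proof (rule restrict_mult_in_Xs)
    have "(\<lambda>i\<in>I. h1 (x i) (y i)) \<in> Xs (m + d1)" "(\<lambda>i\<in>I. h2 (x i) (y i)) \<in> Xs (m + d2)"
      using d1 d2 that by blast+
    then show "(\<lambda>i\<in>I. h1 (x i) (y i)) \<in> Xs (m + max d1 d2)"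
      "(\<lambda>i\<in>I. h2 (x i) (y i)) \<in> Xs (m + max d1 d2)"
      by (simp_all add: in_Xs_mono)
  qed
  then show ?case by (metis add_Suc_right)
next
  case (inv h1)
  then obtain d1 where
    d1: "\<forall>m. \<forall>x\<in>Xs m. \<forall>y\<in>Xs m. (\<lambda>i\<in>I. h1 (x i) (y i)) \<in> Xs (m + d1)"
    by blast
  have "(\<lambda>i\<in>I. inv (h1 (x i) (y i))) \<in> Xs (Suc (m + d1))"
    if "x \<in> Xs m" "y \<in> Xs m" for m x y
    using d1[rule_format, OF that] by (rule restrict_inv_in_Xs)
  then show ?case by (metis add_Suc_right)
qed

lemma set_level_indicator:
  assumes "a \<in> carrier G" "b \<in> carrier G" "f \<in> monomials2 G" "homogeneous2 G f" "f a b = b"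
  shows "set_level (\<lambda>S. level (pow_indicator G I b S))"
proof
  let ?ind = "pow_indicator G I"
  have ind_in: "?ind g S \<in> H" if "g \<in> carrier G" for g S
    using that by (rule pow_indicator_in)
  show "level (?ind b (A \<union> B)) \<le> max (level (?ind b A)) (level (?ind b B)) + 1"
    if "A \<inter> B = {}" for A B
    using level_pow_mult[OF ind_in[OF assms(2), of A] ind_in[OF assms(2), of B]]
    by (simp add: pow_mult_indicator_disjoint[OF that assms(2)])
  show "level (?ind b (R - S)) \<le> max (level (?ind b R)) (level (?ind b S)) + 2"
    if "S \<subseteq> R" for R S
  proof -
    have "level (?ind b (R - S)) \<le> max (level (?ind b R)) (level (pow_inv G I (?ind b S))) + 1"
      using level_pow_mult[OF ind_in[OF assms(2), of R] pow_inv_closed[OF ind_in[OF assms(2), of S]]]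
      by (simp add: pow_mult_indicator_inv_subset[OF that assms(2)])
    with level_pow_inv[OF ind_in[OF assms(2)], of S] show ?thesis by simp
  qed
  show "\<exists>c. \<forall>j. level (?ind b (T j)) \<le> level (?ind b (D j)) + c"
    if D: "disjoint_family D" and T: "\<And>j. T j \<subseteq> D j" for D T :: "nat \<Rightarrow> 'i set"
  proof -
    obtain d where d: "\<forall>m. \<forall>x\<in>Xs m. \<forall>y\<in>Xs m. (\<lambda>i\<in>I. f (x i) (y i)) \<in> Xs (m + d)"
      using monomial_in_Xs_add[OF assms(3)] by blast
    define U where "U = (\<Union>j. T j)"
    have "U \<inter> D j = T j" for j
      unfolding U_def using D T by (rule disjoint_family_Union_Int)
    \<comment> \<open>A single element \<open>a\<^sub>U\<close> serves every \<open>j\<close>, which makes the constant uniform.\<close>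
    have "level (?ind b (T j)) \<le> level (?ind b (D j)) + level (?ind a U) + d" for j
    proof -
      let ?m = "level (?ind b (D j)) + level (?ind a U)"
      have "?ind a U \<in> Xs ?m" "?ind b (D j) \<in> Xs ?m"
        using in_Xs_if_level_le ind_in assms(1,2) by simp_all
      with d have "(\<lambda>i\<in>I. f (?ind a U i) (?ind b (D j) i)) \<in> Xs (?m + d)"
        by blast
      then show ?thesis
        by (simp add: level_le homogeneous2_indicator[OF assms(4,5,1,2) \<open>U \<inter> D j = T j\<close>])
    qed
    then show ?thesis by (metis add.assoc)
  qed
qed

definition bounded_indicator_elements :: "'a set" where
  "bounded_indicator_elements = {g \<in> carrier G. \<exists>k. \<forall>S. pow_indicator G I g S \<in> Xs k}"

lemma bounded_indicator_elementsD:
  "g \<in> bounded_indicator_elements \<Longrightarrow> \<exists>k. \<forall>S. pow_indicator G I g S \<in> Xs k"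
  unfolding bounded_indicator_elements_def by blast

lemma bounded_indicator_elements_subset: "bounded_indicator_elements \<subseteq> carrier G"
  unfolding bounded_indicator_elements_def by blast

lemma bounded_indicator_elementsI:
  "g \<in> carrier G \<Longrightarrow> (\<And>S. pow_indicator G I g S \<in> Xs k) \<Longrightarrow> g \<in> bounded_indicator_elements"
  unfolding bounded_indicator_elements_def by blast

lemma bounded_indicator_elements_mult:
  assumes "g \<in> bounded_indicator_elements" "h \<in> bounded_indicator_elements"
  shows "g \<otimes> h \<in> bounded_indicator_elements"
proof -
  obtain k l where g: "g \<in> carrier G" "\<And>S. pow_indicator G I g S \<in> Xs k"
    and h: "h \<in> carrier G" "\<And>S. pow_indicator G I h S \<in> Xs l"
    using bounded_indicator_elementsD[OF assms(1)] bounded_indicator_elementsD[OF assms(2)]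
      assms bounded_indicator_elements_subset by blast
  have "pow_indicator G I g S \<in> Xs (max k l)" "pow_indicator G I h S \<in> Xs (max k l)" for S
    using in_Xs_mono[OF g(2)] in_Xs_mono[OF h(2)] by simp_all
  then have "pow_indicator G I (g \<otimes> h) S \<in> Xs (Suc (max k l))" for S
    using pow_mult_in_Xs by (simp add: pow_mult_indicator[OF g(1) h(1), symmetric])
  then show ?thesis by (rule bounded_indicator_elementsI[OF m_closed[OF g(1) h(1)]])
qed

lemma bounded_indicator_elements_inv:
  assumes "g \<in> bounded_indicator_elements"
  shows "inv g \<in> bounded_indicator_elements"
proof -
  obtain k where g: "g \<in> carrier G" "\<And>S. pow_indicator G I g S \<in> Xs k"
    using bounded_indicator_elementsD[OF assms] assms bounded_indicator_elements_subset by blast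
  then have "pow_indicator G I (inv g) S \<in> Xs (Suc k)" for S
    using pow_inv_in_Xs by (simp add: pow_inv_indicator[OF g(1), symmetric])
  then show ?thesis by (rule bounded_indicator_elementsI[OF inv_closed[OF g(1)]])
qed

lemma bounded_indicator_elements_conj:
  assumes x: "x \<in> carrier G" and "g \<in> bounded_indicator_elements"
  shows "x \<otimes> g \<otimes> inv x \<in> bounded_indicator_elements"
proof -
  obtain k where g: "g \<in> carrier G" "\<And>S. pow_indicator G I g S \<in> Xs k"
    using bounded_indicator_elementsD[OF assms(2)] assms(2) bounded_indicator_elements_subset by blast
  have const: "(\<lambda>i\<in>I. x) \<in> H" "(\<lambda>i\<in>I. inv x) \<in> H"
    using x unfolding pow_carrier_def by auto
  define m where "m = max k (max (level (\<lambda>i\<in>I. x)) (level (\<lambda>i\<in>I. inv x)))"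
  have x_m: "(\<lambda>i\<in>I. x) \<in> Xs m" and inv_x_m: "(\<lambda>i\<in>I. inv x) \<in> Xs (Suc m)"
    using in_Xs_if_level_le[OF const(1)] in_Xs_if_level_le[OF const(2)] unfolding m_def by auto
  have "pow_indicator G I (x \<otimes> g \<otimes> inv x) S \<in> Xs (Suc (Suc m))" for S
  proof -
    have "pow_mult G I (\<lambda>i\<in>I. x) (pow_indicator G I g S) \<in> Xs (Suc m)"
      using x_m in_Xs_mono[OF g(2)] unfolding m_def by (intro pow_mult_in_Xs) auto
    from pow_mult_in_Xs[OF this inv_x_m] show ?thesis
      by (simp only: pow_conj_indicator[OF x g(1)])
  qed
  then show ?thesis
    by (rule bounded_indicator_elementsI[OF m_closed[OF m_closed[OF x g(1)] inv_closed[OF x]]])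
qed

lemma bounded_indicator_elements_normal: "bounded_indicator_elements \<lhd> G"
proof -
  have "\<one> \<in> bounded_indicator_elements"
    by (rule bounded_indicator_elementsI[where k = "Suc 0"]) (simp_all add: pow_indicator_one pow_one_in_Xs)
  then have "subgroup bounded_indicator_elements G"
  proof (intro subgroupI bounded_indicator_elements_subset)
    show "g \<otimes> h \<in> bounded_indicator_elements"
      if "g \<in> bounded_indicator_elements" "h \<in> bounded_indicator_elements" for g h
      using that by (rule bounded_indicator_elements_mult)
  qed (auto intro: bounded_indicator_elements_inv)
  then show ?thesis
    using bounded_indicator_elements_conj by (simp add: normal_inv_iff)
qed

lemma restriction_to_values_in_Xs:
  assumes "finite A" "A \<subseteq> bounded_indicator_elements"
  shows "\<exists>K. \<forall>x. (\<lambda>i\<in>I. if x i \<in> A then x i else \<one>) \<in> Xs K"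
  using assms
proof (induction A rule: finite_induct)
  case empty
  have "(\<lambda>i\<in>I. if x i \<in> {} then x i else \<one>) = pow_one G I" for x
    unfolding pow_one_def by simp
  then show ?case using pow_one_in_Xs by metis
next
  case (insert g A)
  then obtain K where K: "\<And>x. (\<lambda>i\<in>I. if x i \<in> A then x i else \<one>) \<in> Xs K"
    by blast
  have g_in: "g \<in> bounded_indicator_elements" and A: "A \<subseteq> carrier G"
    using insert.prems bounded_indicator_elements_subset by auto
  obtain k where g: "g \<in> carrier G" "\<And>S. pow_indicator G I g S \<in> Xs k"
    using bounded_indicator_elementsD[OF g_in] g_in bounded_indicator_elements_subset by blast
  have "(\<lambda>i\<in>I. if x i \<in> insert g A then x i else \<one>)
      = pow_mult G I (pow_indicator G I g {i. x i = g}) (\<lambda>i\<in>I. if x i \<in> A then x i else \<one>)" for x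
    unfolding pow_mult_def pow_indicator_def
    using g(1) A \<open>g \<notin> A\<close> by (intro restrict_ext) auto
  moreover have "pow_mult G I (pow_indicator G I g {i. x i = g}) (\<lambda>i\<in>I. if x i \<in> A then x i else \<one>)
      \<in> Xs (Suc (max k K))" for x
    using in_Xs_mono[OF g(2)] in_Xs_mono[OF K] by (intro pow_mult_in_Xs) auto
  ultimately show ?case by metis
qed

end

theorem mainTheorem8:
  fixes G :: "('a, 'b) monoid_scheme" and I :: "'i set"
    and f :: "'a \<Rightarrow> 'a \<Rightarrow> 'a" and a b :: 'a
    and Xs :: "nat \<Rightarrow> ('i \<Rightarrow> 'a) set"
  assumes "group G" and "finite (carrier G)"
    and "a \<in> carrier G" and "b \<in> carrier G"
    and "f \<in> monomials2 G" and "homogeneous2 G f" and "f a b = b"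
    and "\<And>m. Xs m \<subseteq> pow_carrier G I"
    and "\<And>m. Xs m \<subseteq> Xs (Suc m)"
    and "\<And>m. gstep G I (Xs m) \<subseteq> Xs (Suc m)"
    and "(\<Union>m. Xs m) = pow_carrier G I"
  shows "\<exists>M. \<forall>m\<ge>M. (\<Pi>\<^sub>E i\<in>I. normal_closure G b) \<subseteq> Xs m"
proof -
  interpret exhaustive_filtration G I Xs
    by (rule exhaustive_filtration.intro[OF assms(1)]) (unfold_locales; simp add: assms(8,10,11))
  let ?N = "normal_closure G b"
  obtain n where "\<And>S. level (pow_indicator G I b S) \<le> n"
    using set_level.level_bounded[OF set_level_indicator[OF assms(3-7)]] by blast
  then have "pow_indicator G I b S \<in> Xs n" for S
    using in_Xs_if_level_le[OF pow_indicator_in[OF assms(4)]] by blast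
  then have "b \<in> bounded_indicator_elements"
    by (rule bounded_indicator_elementsI[OF assms(4)])
  then have N_bounded: "?N \<subseteq> bounded_indicator_elements"
    using bounded_indicator_elements_normal unfolding normal_closure_def by blast
  moreover have "finite ?N"
    using subset_trans[OF N_bounded bounded_indicator_elements_subset] assms(2) by (rule finite_subset)
  ultimately obtain K where K: "\<And>x. (\<lambda>i\<in>I. if x i \<in> ?N then x i else \<one>\<^bsub>G\<^esub>) \<in> Xs K"
    using restriction_to_values_in_Xs by blast
  have "x \<in> Xs m" if "K \<le> m" "x \<in> (\<Pi>\<^sub>E i\<in>I. ?N)" for m x
  proof -
    have "(\<lambda>i\<in>I. if x i \<in> ?N then x i else \<one>\<^bsub>G\<^esub>) = x"
      using that(2) by (auto simp: PiE_iff extensional_def)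
    then show ?thesis using in_Xs_mono[OF K that(1)] by metis
  qed
  then show ?thesis by blast
qed

end
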